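(* In the algorithm described in the context, for each agent $i$ and each round $r$, when $N$ is sufficiently large such that $N\ge4\ln N$, the number $V_i^r$ of perturbed adoption vectors sampled by agent $i$ in round $r$ satisfies $$\frac{3(1-\beta)}{32}hg(N)\le V_i^r\le\frac{15}{8}hg(N)$$ with probability at least $1-\frac{6M+3}{N^{10}}$.
   Context: Setting. $\mathcal G=(\mathcal N,\mathcal E)$ is a connected, non-bipartite undirected graph on agents $\mathcal N=\{1,\dots,N\}$; $\mathcal N_i$ is the neighbor set of $i$, $N_i=|\mathcal N_i|$. There are $M$ options; quality signals $\Phi_j^r\in\{0,1\}$ are i.i.d. Bernoulli$(\eta_j)$ over rounds $r$. $X^r_{i,j}\in\{0,1\}$ indicates agent $i$ adopts option $j$ in round $r$ ($\sum_jX^r_{i,j}\le1$); $D^r_j=\sum_iX^r_{i,j}$, $D^r=\sum_jD^r_j$, $Q^r_j=D^r_j/D^r$, $Q^0_j=1/M$. The function $g:\mathbb N^+\to\mathbb R$ satisfies: for every $\ell>0$, $g(N)>\ell\ln N$ and $g(N)<\ell N$ for all sufficiently large $N$. Parameters: $\varepsilon>0$, $\mu\in(0,1)$, $\beta\in(1/2,1)$, $\sigma\ge11$, $h=16\sigma/(1-\beta)$. Metropolis–Hastings random walk: from $i$ move to $i'\in\mathcal N_i$ with probability $\min\{1/N_i,1/N_{i'}\}$, else stay; walk length $L=O(\log N)$ chosen so that the endpoint is at each agent with probability in $[\frac1N-\frac1{N^3},\frac1N+\frac1{N^3}]$. Round $r$: (1) an agent that adopted an option in round $r-1$ perturbs each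 coordinate of its adoption vector independently (keep with probability $\frac{e^{\varepsilon/2}}{e^{\varepsilon/2}+1}$, flip otherwise); (2) each such agent launches $hg(N)$ independent random-walk tokens of length $L$ carrying its perturbed vector (forwarded via per-agent FIFO queues, up to $hg(N)$ tokens per agent per slot); a token is sampled by the agent where it ends; $V^r_i$ is the number of tokens sampled by $i$; (3) with $\Lambda^r_{i,j}$ the fraction of sampled vectors with $j$-th coordinate $1$, $\widetilde Q^r_{i,j}=\max\{\frac{e^{\varepsilon/2}+1}{e^{\varepsilon/2}-1}\Lambda^r_{i,j}-\frac1{e^{\varepsilon/2}-1},0\}$, $\widehat Q^r_{i,j}=\widetilde Q^r_{i,j}/\sum_{j'}\widetilde Q^r_{i,j'}$, and $i$ selects option $j$ with probability $(1-\mu)\widehat Q^r_{i,j}+\mu/M$; (4) having selected $j^*$, $i$ adopts it with probability $\beta$ if $\Phi^r_{j^*}=1$, $1-\beta$ if $\Phi^r_{j^*}=0$, else adopts nothing. *)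

theory Defs
  imports "HOL-Probability.Probability"
begin

definition undirected_graph :: "nat \<Rightarrow> (nat \<Rightarrow> nat \<Rightarrow> bool) \<Rightarrow> bool" where
  "undirected_graph N E \<longleftrightarrow>
     (\<forall>i j. E i j \<longrightarrow> i < N \<and> j < N) \<and> (\<forall>i j. E i j \<longrightarrow> E j i) \<and> (\<forall>i. \<not> E i i)"

definition graph_connected :: "nat \<Rightarrow> (nat \<Rightarrow> nat \<Rightarrow> bool) \<Rightarrow> bool" where
  "graph_connected N E \<longleftrightarrow> (\<forall>i<N. \<forall>j<N. E\<^sup>*\<^sup>* i j)"

definition graph_bipartite :: "nat \<Rightarrow> (nat \<Rightarrow> nat \<Rightarrow> bool) \<Rightarrow> bool" where
  "graph_bipartite N E \<longleftrightarrow> (\<exists>c :: nat \<Rightarrow> bool. \<forall>i j. E i j \<longrightarrow> c i \<noteq> c j)"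

definition nbrs :: "nat \<Rightarrow> (nat \<Rightarrow> nat \<Rightarrow> bool) \<Rightarrow> nat \<Rightarrow> nat set" where
  "nbrs N E i = {i'. i' < N \<and> E i i'}"

definition deg :: "nat \<Rightarrow> (nat \<Rightarrow> nat \<Rightarrow> bool) \<Rightarrow> nat \<Rightarrow> nat" where
  "deg N E i = card (nbrs N E i)"

definition mh_prob :: "nat \<Rightarrow> (nat \<Rightarrow> nat \<Rightarrow> bool) \<Rightarrow> nat \<Rightarrow> nat \<Rightarrow> real" where
  "mh_prob N E i i' =
     (if i' \<in> nbrs N E i then min (1 / real (deg N E i)) (1 / real (deg N E i'))
      else if i' = i then 1 - (\<Sum>k\<in>nbrs N E i. min (1 / real (deg N E i)) (1 / real (deg N E k)))
      else 0)"

definition mh_step :: "nat \<Rightarrow> (nat \<Rightarrow> nat \<Rightarrow> bool) \<Rightarrow> nat \<Rightarrow> nat pmf" where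
  "mh_step N E i = embed_pmf (mh_prob N E i)"

fun mh_walk :: "nat \<Rightarrow> (nat \<Rightarrow> nat \<Rightarrow> bool) \<Rightarrow> nat \<Rightarrow> nat \<Rightarrow> nat pmf" where
  "mh_walk N E 0 i = return_pmf i"
| "mh_walk N E (Suc n) i = mh_walk N E n i \<bind> mh_step N E"

text \<open>Adoption state: X i = Some j iff agent i adopted option j; None = adopted nothing.\<close>
type_synonym adoption = "nat \<Rightarrow> nat option"

text \<open>Randomized response on the adoption vector (one-hot vector of option j,
  coordinates 0..M-1): each coordinate kept w.p. e^(eps/2)/(e^(eps/2)+1), flipped otherwise.\<close>
definition perturb :: "nat \<Rightarrow> real \<Rightarrow> nat \<Rightarrow> (nat \<Rightarrow> bool) pmf" where
  "perturb M \<epsilon> j = Pi_pmf {..<M} False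
     (\<lambda>k. map_pmf (\<lambda>keep. if keep then k = j else k \<noteq> j)
            (bernoulli_pmf (exp (\<epsilon>/2) / (exp (\<epsilon>/2) + 1))))"

text \<open>Number of tokens launched by each adopting agent: h g(N), rounded up to a natural number.\<close>
definition num_tokens :: "real \<Rightarrow> real \<Rightarrow> (nat \<Rightarrow> real) \<Rightarrow> nat \<Rightarrow> nat" where
  "num_tokens \<beta> \<sigma> g N = nat \<lceil>(16 * \<sigma> / (1 - \<beta>)) * g N\<rceil>"

text \<open>Estimate hat Q from the sampled vectors of one agent.  Convention: if no
  vector is sampled or all tilde Q vanish, hat Q is uniform 1/M (= Q^0).\<close>
definition Qhat :: "nat \<Rightarrow> real \<Rightarrow> nat \<Rightarrow> (nat \<Rightarrow> real) \<Rightarrow> nat \<Rightarrow> real" where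
  "Qhat M \<epsilon> V \<Lambda> j =
     (let Qt = (\<lambda>j'. max ((exp (\<epsilon>/2) + 1) / (exp (\<epsilon>/2) - 1) * \<Lambda> j' - 1 / (exp (\<epsilon>/2) - 1)) 0);
          S = (\<Sum>j'<M. Qt j')
      in if V = 0 \<or> S = 0 then 1 / real M else Qt j / S)"

definition select_pmf :: "nat \<Rightarrow> real \<Rightarrow> (nat \<Rightarrow> real) \<Rightarrow> nat pmf" where
  "select_pmf M \<mu> Q = embed_pmf (\<lambda>j. if j < M then (1 - \<mu>) * Q j + \<mu> / real M else 0)"

text \<open>One round: given the adoptions of the previous round, returns the pair
  (adoptions of this round, numbers V_i of sampled vectors in this round).\<close>
definition round_step ::
  "nat \<Rightarrow> (nat \<Rightarrow> nat \<Rightarrow> bool) \<Rightarrow> nat \<Rightarrow> nat \<Rightarrow> (nat \<Rightarrow> real) \<Rightarrow> real \<Rightarrow> real \<Rightarrow> real \<Rightarrow> nat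
   \<Rightarrow> adoption \<Rightarrow> (adoption \<times> (nat \<Rightarrow> nat)) pmf" where
  "round_step N E L M \<eta> \<epsilon> \<mu> \<beta> T X =
     (let A = {a. a < N \<and> X a \<noteq> None} in
      do {
        pv \<leftarrow> Pi_pmf A (\<lambda>_. False) (\<lambda>a. perturb M \<epsilon> (the (X a)));
        e \<leftarrow> Pi_pmf (A \<times> {..<T}) 0 (\<lambda>(a, t). mh_walk N E L a);
        let V = (\<lambda>i. card {tk \<in> A \<times> {..<T}. e tk = i});
        let \<Lambda> = (\<lambda>i j. real (card {tk \<in> A \<times> {..<T}. e tk = i \<and> pv (fst tk) j}) / real (V i));
        \<Phi> \<leftarrow> Pi_pmf {..<M} False (\<lambda>j. bernoulli_pmf (\<eta> j));
        X' \<leftarrow> Pi_pmf {..<N} None (\<lambda>i.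
                do {
                  j \<leftarrow> select_pmf M \<mu> (Qhat M \<epsilon> (V i) (\<Lambda> i));
                  b \<leftarrow> bernoulli_pmf (if \<Phi> j then \<beta> else 1 - \<beta>);
                  return_pmf (if b then Some j else None)
                });
        return_pmf (X', V)
      })"

text \<open>The whole process: state after round r (adoptions X^r and counts V^r).
  Before round 1 nobody has adopted (round 1 therefore uses hat Q = Q^0 = 1/M).\<close>
fun run ::
  "nat \<Rightarrow> (nat \<Rightarrow> nat \<Rightarrow> bool) \<Rightarrow> nat \<Rightarrow> nat \<Rightarrow> (nat \<Rightarrow> real) \<Rightarrow> real \<Rightarrow> real \<Rightarrow> real \<Rightarrow> nat
   \<Rightarrow> nat \<Rightarrow> (adoption \<times> (nat \<Rightarrow> nat)) pmf" where
  "run N E L M \<eta> \<epsilon> \<mu> \<beta> T 0 = return_pmf (\<lambda>_. None, \<lambda>_. 0)"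
| "run N E L M \<eta> \<epsilon> \<mu> \<beta> T (Suc r) =
     run N E L M \<eta> \<epsilon> \<mu> \<beta> T r \<bind> (\<lambda>(X, V). round_step N E L M \<eta> \<epsilon> \<mu> \<beta> T X)"

end

theory Submission
  imports Defs
begin

text \<open>
  Conditionally on everything that happens before step (4), the agents adopt independently,
  each with probability at least \<open>1 - \<beta>\<close>. A Chernoff bound therefore gives more than
  \<open>(1 - \<beta>) N / 4\<close> adopters in round \<open>r - 1\<close> except with probability
  \<open>exp (-(1 - \<beta>) N / 4) \<le> N\<^sup>-\<^sup>1\<^sup>0\<close>, since \<open>2 ln N < g(N) < (1 - \<beta>) N / 40\<close>.
  Given such a round, \<open>V\<^sub>i\<^sup>r\<close> counts how many of the \<open>|A| h g(N)\<close> independent walk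
  tokens end at \<open>i\<close>, each with probability \<open>1/N \<plusminus> 1/N\<^sup>3\<close>, so its mean lies between
  about \<open>(1 - \<beta>) h g(N) / 4\<close> and \<open>h g(N)\<close>. The exponential-moment bounds with
  \<open>s = -1\<close> and \<open>s = 1/2\<close> then push both tail exponents below \<open>-10 ln N\<close>, because
  \<open>\<sigma> g(N) > 22 ln N\<close>; the total failure probability is \<open>3 / N\<^sup>1\<^sup>0\<close>.
\<close>

lemma measure_pmf_bind_eq_expectation:
  "measure_pmf.prob (bind_pmf p f) B = measure_pmf.expectation p (\<lambda>x. measure_pmf.prob (f x) B)"
  unfolding measure_pmf_bind
  by (rule measure_pmf.measure_bind[where N = "count_space UNIV"])
     (auto simp: space_subprob_algebra
       intro!: measure_pmf_in_subprob_algebra prob_space_imp_subprob_space measure_pmf.prob_space_axioms)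

lemma measure_pmf_bind_le_except:
  fixes d :: real
  assumes "measure_pmf.prob p G \<le> d\<^sub>0" and "0 \<le> d"
    and "\<And>x. x \<in> set_pmf p \<Longrightarrow> x \<notin> G \<Longrightarrow> measure_pmf.prob (f x) B \<le> d"
  shows "measure_pmf.prob (bind_pmf p f) B \<le> d\<^sub>0 + d"
proof -
  have "measure_pmf.prob (bind_pmf p f) B \<le> measure_pmf.expectation p (\<lambda>x. indicator G x + d)"
    unfolding measure_pmf_bind_eq_expectation
  proof (intro integral_mono_AE AE_pmfI)
    show "integrable (measure_pmf p) (\<lambda>x. measure_pmf.prob (f x) B)"
      by (intro measure_pmf.integrable_const_bound[where B = 1]) auto
    show "integrable (measure_pmf p) (\<lambda>x. indicator G x + d)"
      by (intro measure_pmf.integrable_const_bound[where B = "1 + d"]) (auto simp: indicator_def assms(2))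
    fix x assume "x \<in> set_pmf p"
    then show "measure_pmf.prob (f x) B \<le> indicator G x + d"
      using assms(3)[of x] add_increasing2[OF assms(2) measure_pmf.prob_le_1] by (cases "x \<in> G") auto
  qed
  also have "\<dots> = measure_pmf.prob p G + d"
    by (simp add: measure_pmf.emeasure_eq_measure)
  finally show ?thesis
    using assms(1) by linarith
qed

lemma measure_pmf_bind_le:
  fixes d :: real
  assumes "0 \<le> d" and "\<And>x. x \<in> set_pmf p \<Longrightarrow> measure_pmf.prob (f x) B \<le> d"
  shows "measure_pmf.prob (bind_pmf p f) B \<le> d"
  using measure_pmf_bind_le_except[of p "{}" 0 d f B] assms by simp

lemma measure_pmf_bind_ge:
  assumes "\<And>x. x \<in> set_pmf p \<Longrightarrow> c \<le> measure_pmf.prob (f x) B"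
  shows "c \<le> measure_pmf.prob (bind_pmf p f) B"
proof -
  have "measure_pmf.expectation p (\<lambda>x. c) \<le> measure_pmf.expectation p (\<lambda>x. measure_pmf.prob (f x) B)"
    by (intro integral_mono_AE AE_pmfI assms measure_pmf.integrable_const
        measure_pmf.integrable_const_bound[where B = 1]) auto
  then show ?thesis
    by (simp add: measure_pmf_bind_eq_expectation)
qed

lemma expectation_exp_count_Pi_pmf:
  fixes s :: real
  assumes "finite I"
  shows "measure_pmf.expectation (Pi_pmf I d p) (\<lambda>f. exp (s * card {i\<in>I. P i (f i)}))
       = (\<Prod>i\<in>I. 1 + measure_pmf.prob (p i) {x. P i x} * (exp s - 1))"
proof -
  have exp_count: "exp (s * card {i\<in>I. P i (f i)}) = (\<Prod>i\<in>I. exp (s * of_bool (P i (f i))))" for f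
    using assms by (simp add: exp_sum[symmetric] sum_distrib_left[symmetric] Collect_conj_eq Int_commute)
  have exp_indicator: "measure_pmf.expectation q (\<lambda>x. exp (s * of_bool (Q x)))
      = 1 + measure_pmf.prob q {x. Q x} * (exp s - 1)" for q :: "'b pmf" and Q
  proof -
    have "(\<lambda>x. exp (s * of_bool (Q x))) = (\<lambda>x. 1 + (exp s - 1) * indicator {x. Q x} x)"
      by (auto simp: indicator_def)
    then show ?thesis
      by (simp add: measure_pmf.emeasure_eq_measure mult.commute)
  qed
  show ?thesis
    unfolding exp_count
    by (subst expectation_prod_Pi_pmf[where f = "\<lambda>i x. exp (s * of_bool (P i x))", OF assms])
       (auto simp: exp_indicator intro!: measure_pmf.integrable_const_bound[where B = "exp \<bar>s\<bar>"])
qed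

text \<open>The hypothesis compares the success
  probabilities with \<open>q\<close> from above when \<open>s > 0\<close> and from below when \<open>s < 0\<close>, so the
  same lemma yields both tails.\<close>

lemma chernoff_count_Pi_pmf:
  fixes s a :: real
  assumes "finite I"
    and "\<And>i. i \<in> I \<Longrightarrow> measure_pmf.prob (p i) {x. P i x} * (exp s - 1) \<le> q i * (exp s - 1)"
  shows "measure_pmf.prob (Pi_pmf I d p) {f. s * a \<le> s * card {i\<in>I. P i (f i)}}
       \<le> exp ((\<Sum>i\<in>I. q i) * (exp s - 1) - s * a)"
proof -
  let ?c = "\<lambda>f. real (card {i\<in>I. P i (f i)})"
  have bounded: "s * ?c f \<le> \<bar>s\<bar> * card I" for f
  proof -
    have "?c f \<le> card I"
      using assms(1) by (simp add: card_mono)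
    then show ?thesis
      by (meson abs_ge_self abs_ge_zero mult_left_mono mult_right_mono of_nat_0_le_iff order_trans)
  qed
  have "measure_pmf.prob (Pi_pmf I d p) {f. s * a \<le> s * ?c f}
      = measure_pmf.prob (Pi_pmf I d p) {f \<in> space (Pi_pmf I d p). exp (s * a) \<le> exp (s * ?c f)}"
    by simp
  also have "\<dots> \<le> measure_pmf.expectation (Pi_pmf I d p) (\<lambda>f. exp (s * ?c f)) / exp (s * a)"
    by (intro integral_Markov_inequality_measure AE_I2
        measure_pmf.integrable_const_bound[where B = "exp (\<bar>s\<bar> * card I)"]) (auto simp: bounded)
  also have "measure_pmf.expectation (Pi_pmf I d p) (\<lambda>f. exp (s * ?c f))
      = (\<Prod>i\<in>I. 1 + measure_pmf.prob (p i) {x. P i x} * (exp s - 1))"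
    by (rule expectation_exp_count_Pi_pmf[OF assms(1)])
  also have "\<dots> \<le> (\<Prod>i\<in>I. exp (q i * (exp s - 1)))"
  proof (intro prod_mono conjI)
    fix i assume "i \<in> I"
    let ?\<pi> = "measure_pmf.prob (p i) {x. P i x}"
    have "?\<pi> * (-1) \<le> ?\<pi> * (exp s - 1)"
      by (intro mult_left_mono) (auto simp: add_increasing)
    then show "0 \<le> 1 + ?\<pi> * (exp s - 1)"
      using measure_pmf.prob_le_1[of "p i" "{x. P i x}"] by linarith
    show "1 + ?\<pi> * (exp s - 1) \<le> exp (q i * (exp s - 1))"
      using assms(2)[OF \<open>i \<in> I\<close>] exp_ge_add_one_self[of "q i * (exp s - 1)"] by linarith
  qed
  also have "\<dots> = exp ((\<Sum>i\<in>I. q i) * (exp s - 1))"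
    by (simp add: exp_sum[OF assms(1)] sum_distrib_right)
  finally show ?thesis
    by (simp add: exp_diff divide_right_mono)
qed

lemma chernoff_count_two_sided_Pi_pmf:
  fixes lo hi \<pi>\<^sub>l\<^sub>o \<pi>\<^sub>h\<^sub>i :: real
  assumes "finite I"
    and "\<And>i. i \<in> I \<Longrightarrow>
           \<pi>\<^sub>l\<^sub>o \<le> measure_pmf.prob (p i) {x. P i x} \<and> measure_pmf.prob (p i) {x. P i x} \<le> \<pi>\<^sub>h\<^sub>i"
  shows "measure_pmf.prob (Pi_pmf I d p)
           {f. \<not> (lo \<le> card {i\<in>I. P i (f i)} \<and> card {i\<in>I. P i (f i)} \<le> hi)}
       \<le> exp (card I * \<pi>\<^sub>l\<^sub>o * (exp (-1) - 1) + lo)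
         + exp (card I * \<pi>\<^sub>h\<^sub>i * (exp (1/2) - 1) - hi / 2)"
proof -
  let ?c = "\<lambda>f. real (card {i\<in>I. P i (f i)})"
  let ?prob = "measure_pmf.prob (Pi_pmf I d p)"
  have lower: "?prob {f. -1 * lo \<le> -1 * ?c f}
      \<le> exp ((\<Sum>i\<in>I. \<pi>\<^sub>l\<^sub>o) * (exp (-1) - 1) - (-1) * lo)"
    by (rule chernoff_count_Pi_pmf[OF assms(1)]) (use assms(2) in \<open>auto intro: mult_right_mono_neg\<close>)
  have upper: "?prob {f. 1/2 * hi \<le> 1/2 * ?c f}
      \<le> exp ((\<Sum>i\<in>I. \<pi>\<^sub>h\<^sub>i) * (exp (1/2) - 1) - 1/2 * hi)"
    by (rule chernoff_count_Pi_pmf[OF assms(1)]) (use assms(2) in \<open>auto intro: mult_right_mono\<close>)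
  have "?prob {f. \<not> (lo \<le> ?c f \<and> ?c f \<le> hi)}
      \<le> ?prob ({f. -1 * lo \<le> -1 * ?c f} \<union> {f. 1/2 * hi \<le> 1/2 * ?c f})"
    by (intro measure_pmf.finite_measure_mono) auto
  also have "\<dots> \<le> ?prob {f. -1 * lo \<le> -1 * ?c f} + ?prob {f. 1/2 * hi \<le> 1/2 * ?c f}"
    by (rule measure_Un_le) auto
  finally show ?thesis
    using lower upper by (simp add: mult_ac)
qed

definition adopters :: "nat \<Rightarrow> adoption \<Rightarrow> nat set" where
  "adopters N X = {a. a < N \<and> X a \<noteq> None}"

definition adopt_pmf :: "real \<Rightarrow> (nat \<Rightarrow> bool) \<Rightarrow> nat pmf \<Rightarrow> nat option pmf" where
  "adopt_pmf \<beta> \<Phi> S = bind_pmf S (\<lambda>j. bind_pmf (bernoulli_pmf (if \<Phi> j then \<beta> else 1 - \<beta>))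
                                      (\<lambda>b. return_pmf (if b then Some j else None)))"

definition mh_walk_near_uniform :: "nat \<Rightarrow> (nat \<Rightarrow> nat \<Rightarrow> bool) \<Rightarrow> nat \<Rightarrow> bool" where
  "mh_walk_near_uniform N E L \<longleftrightarrow>
     (\<forall>s<N. \<forall>k<N. 1 / real N - 1 / real N ^ 3 \<le> pmf (mh_walk N E L s) k
                 \<and> pmf (mh_walk N E L s) k \<le> 1 / real N + 1 / real N ^ 3)"

lemma exp_neg_one_le_half: "exp (-1 :: real) \<le> 1/2"
  using exp_ge_add_one_self[of "1 :: real"] by (simp add: exp_minus field_simps)

lemma exp_le_inverse_power:
  fixes x N :: real
  assumes "0 < N" and "x + k * ln N \<le> 0"
  shows "exp x \<le> 1 / N ^ k"
proof -
  have "exp x \<le> exp (- (k * ln N))"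
    using assms(2) by simp
  also have "\<dots> = 1 / N ^ k"
    using assms(1) by (simp add: exp_minus exp_of_nat_mult inverse_eq_divide)
  finally show ?thesis .
qed

lemma inverse_plus_minus_inverse_cube_bounds:
  fixes N :: real
  assumes "10 \<le> N"
  shows "99/100 / N \<le> 1 / N - 1 / N ^ 3" and "1 / N + 1 / N ^ 3 \<le> 101/100 / N"
proof -
  have "100 \<le> N ^ 2"
    using power_mono[OF assms, of 2] by simp
  then have "1 / N ^ 3 \<le> 1/100 / N"
    using assms by (simp add: field_simps power3_eq_cube power2_eq_square)
  then show "99/100 / N \<le> 1 / N - 1 / N ^ 3" and "1 / N + 1 / N ^ 3 \<le> 101/100 / N"
    by simp_all
qed

lemma lower_tail_exponent_le:
  fixes n N H \<beta> :: real
  assumes N: "10 \<le> N" and n: "(1 - \<beta>) / 4 * N * H \<le> n"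
    and "0 \<le> 1 - \<beta>" "0 \<le> H" and large: "10 * ln N \<le> 3/100 * ((1 - \<beta>) * H)"
  shows "n * (1 / N - 1 / N ^ 3) * (exp (-1) - 1) + 3 * (1 - \<beta>) / 32 * H + 10 * ln N \<le> 0"
proof -
  define m where "m = n * (1 / N - 1 / N ^ 3)"
  have "0 \<le> (1 - \<beta>) / 4 * N * H"
    using assms by simp
  then have "n * (99/100 / N) \<le> m"
    unfolding m_def using n inverse_plus_minus_inverse_cube_bounds(1)[OF N] by (intro mult_left_mono) auto
  moreover have "(1 - \<beta>) / 4 * N * H * (99/100 / N) \<le> n * (99/100 / N)"
    using n N by (intro mult_right_mono) auto
  moreover have "(1 - \<beta>) / 4 * N * H * (99/100 / N) = 99/400 * ((1 - \<beta>) * H)"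
    using N by simp
  ultimately have mean: "99/400 * ((1 - \<beta>) * H) \<le> m"
    by linarith
  moreover have "0 \<le> (1 - \<beta>) * H"
    using assms by simp
  ultimately have "m * (exp (-1) - 1) \<le> m * (-1/2)"
    using exp_neg_one_le_half by (intro mult_left_mono) linarith+
  moreover have "3 * (1 - \<beta>) / 32 * H = 3/32 * ((1 - \<beta>) * H)"
    by simp
  ultimately have "m * (exp (-1) - 1) + 3 * (1 - \<beta>) / 32 * H + 10 * ln N \<le> 0"
    using mean large by linarith
  then show ?thesis
    by (simp only: m_def)
qed

lemma upper_tail_exponent_le:
  fixes n N H :: real
  assumes N: "10 \<le> N" and n: "0 \<le> n" "n \<le> N * (H + 1)"
    and large: "10 * ln N + 1 \<le> 9/50 * H"
  shows "n * (1 / N + 1 / N ^ 3) * (exp (1/2) - 1) - 15 / 8 * H / 2 + 10 * ln N \<le> 0"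
proof -
  have "n * (1 / N + 1 / N ^ 3) \<le> n * (101/100 / N)"
    using n inverse_plus_minus_inverse_cube_bounds(2)[OF N] by (intro mult_left_mono) auto
  also have "\<dots> \<le> N * (H + 1) * (101/100 / N)"
    using n N by (intro mult_right_mono) auto
  finally have mean: "n * (1 / N + 1 / N ^ 3) \<le> 101/100 * (H + 1)"
    using N by simp
  have "exp (1/2 :: real) - 1 \<le> 3/4"
    using exp_bound[of "1/2 :: real"] by (simp add: power2_eq_square)
  then have "n * (1 / N + 1 / N ^ 3) * (exp (1/2) - 1) \<le> n * (1 / N + 1 / N ^ 3) * (3/4)"
    using n N by (intro mult_left_mono) auto
  then show ?thesis
    using mean large by simp
qed

lemma adoption_prob_ge:
  assumes "1/2 \<le> \<beta>" and "\<beta> \<le> 1"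
  shows "1 - \<beta> \<le> measure_pmf.prob (adopt_pmf \<beta> \<Phi> S) {x. x \<noteq> None}"
  unfolding adopt_pmf_def
proof (rule measure_pmf_bind_ge)
  fix j
  let ?q = "if \<Phi> j then \<beta> else 1 - \<beta>"
  have "{b. b} = {True}"
    by auto
  then have "measure_pmf.prob (bernoulli_pmf ?q \<bind> (\<lambda>b. return_pmf (if b then Some j else None)))
          {x. x \<noteq> None} = ?q"
    using assms by (simp add: map_pmf_def[symmetric] vimage_def measure_pmf_single)
  then show "1 - \<beta> \<le> measure_pmf.prob (bernoulli_pmf ?q \<bind> (\<lambda>b. return_pmf (if b then Some j else None)))
          {x. x \<noteq> None}"
    using assms by simp
qed

lemma few_adopters_prob:
  assumes "1/2 \<le> \<beta>" and "\<beta> \<le> 1"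
  shows "measure_pmf.prob (Pi_pmf {..<N} None (\<lambda>i. adopt_pmf \<beta> \<Phi> (S i)))
           {X. card (adopters N X) \<le> (1 - \<beta>) / 4 * N}
         \<le> exp (- ((1 - \<beta>) / 4 * N))"
proof -
  have "{X. card (adopters N X) \<le> (1 - \<beta>) / 4 * N}
      = {X. -1 * ((1 - \<beta>) / 4 * N) \<le> -1 * real (card {i\<in>{..<N}. X i \<noteq> None})}"
    by (simp add: adopters_def)
  then have "measure_pmf.prob (Pi_pmf {..<N} None (\<lambda>i. adopt_pmf \<beta> \<Phi> (S i)))
               {X. card (adopters N X) \<le> (1 - \<beta>) / 4 * N}
      \<le> exp ((\<Sum>i<N. 1 - \<beta>) * (exp (-1) - 1) - (-1) * ((1 - \<beta>) / 4 * N))"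
    by (simp only:)
       (rule chernoff_count_Pi_pmf[OF finite_lessThan mult_right_mono_neg[OF adoption_prob_ge[OF assms]]],
        simp)
  also have "\<dots> \<le> exp (- ((1 - \<beta>) / 4 * N))"
  proof -
    have "N * (1 - \<beta>) * (exp (-1) - 1) \<le> N * (1 - \<beta>) * (-1/2)"
      using exp_neg_one_le_half assms by (intro mult_left_mono) auto
    then show ?thesis
      by simp
  qed
  finally show ?thesis .
qed

lemma round_step_few_adopters_prob:
  assumes "1/2 \<le> \<beta>" and "\<beta> \<le> 1"
  shows "measure_pmf.prob (round_step N E L M \<eta> \<epsilon> \<mu> \<beta> T X)
           {(X', V). card (adopters N X') \<le> (1 - \<beta>) / 4 * N}
         \<le> exp (- ((1 - \<beta>) / 4 * N))"
proof -
  have "measure_pmf.prob (round_step N E L M \<eta> \<epsilon> \<mu> \<beta> T X)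
          {(X', V). card (adopters N X') \<le> (1 - \<beta>) / 4 * N}
      = measure_pmf.prob (map_pmf fst (round_step N E L M \<eta> \<epsilon> \<mu> \<beta> T X))
          {X'. card (adopters N X') \<le> (1 - \<beta>) / 4 * N}"
    by (simp add: vimage_def case_prod_unfold)
  also have "\<dots> \<le> exp (- ((1 - \<beta>) / 4 * N))"
    unfolding round_step_def Let_def map_bind_pmf map_return_pmf fst_conv bind_return_pmf'
      adopt_pmf_def[symmetric]
    by (intro measure_pmf_bind_le few_adopters_prob assms) simp_all
  finally show ?thesis .
qed

lemma map_snd_round_step:
  "map_pmf snd (round_step N E L M \<eta> \<epsilon> \<mu> \<beta> T X)
     = map_pmf (\<lambda>e i. card {tk \<in> adopters N X \<times> {..<T}. e tk = i})
         (Pi_pmf (adopters N X \<times> {..<T}) 0 (\<lambda>(a, t). mh_walk N E L a))"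
  by (simp only: round_step_def Let_def map_bind_pmf map_return_pmf snd_conv bind_pmf_const
      flip: adopters_def) (simp add: map_pmf_def)

lemma round_step_token_count_deviation_le:
  fixes lo hi :: real and X :: adoption and T :: nat
  assumes "mh_walk_near_uniform N E L" and "i < N"
  defines "n \<equiv> real (card (adopters N X)) * real T"
  shows "measure_pmf.prob (round_step N E L M \<eta> \<epsilon> \<mu> \<beta> T X)
           {(X', V). \<not> (lo \<le> V i \<and> V i \<le> hi)}
         \<le> exp (n * (1 / real N - 1 / real N ^ 3) * (exp (-1) - 1) + lo)
           + exp (n * (1 / real N + 1 / real N ^ 3) * (exp (1/2) - 1) - hi / 2)"
proof -
  have "measure_pmf.prob (round_step N E L M \<eta> \<epsilon> \<mu> \<beta> T X) {(X', V). \<not> (lo \<le> V i \<and> V i \<le> hi)}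
      = measure_pmf.prob (map_pmf snd (round_step N E L M \<eta> \<epsilon> \<mu> \<beta> T X))
          {V. \<not> (lo \<le> V i \<and> V i \<le> hi)}"
    by (simp add: vimage_def case_prod_unfold)
  also have "\<dots> \<le> exp (n * (1 / real N - 1 / real N ^ 3) * (exp (-1) - 1) + lo)
                  + exp (n * (1 / real N + 1 / real N ^ 3) * (exp (1/2) - 1) - hi / 2)"
    unfolding map_snd_round_step measure_map_pmf vimage_def mem_Collect_eq n_def
    using chernoff_count_two_sided_Pi_pmf[where I = "adopters N X \<times> {..<T}" and d = 0
            and p = "\<lambda>(a, t). mh_walk N E L a" and P = "\<lambda>_ k. k = i"
            and \<pi>\<^sub>l\<^sub>o = "1 / real N - 1 / real N ^ 3" and \<pi>\<^sub>h\<^sub>i = "1 / real N + 1 / real N ^ 3"] assms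
    by (auto simp: adopters_def mh_walk_near_uniform_def measure_pmf_single card_cartesian_product
        split: prod.split)
  finally show ?thesis .
qed

lemma round_step_token_count_deviation_prob:
  fixes H :: real
  assumes N: "10 \<le> N" and "i < N" and walk: "mh_walk_near_uniform N E L"
    and many: "(1 - \<beta>) / 4 * N < card (adopters N X)"
    and T: "H \<le> T" "T \<le> H + 1"
    and large: "10 * ln N \<le> 3/100 * ((1 - \<beta>) * H)" "10 * ln N + 1 \<le> 9/50 * H"
  shows "measure_pmf.prob (round_step N E L M \<eta> \<epsilon> \<mu> \<beta> T X)
           {(X', V). \<not> (3 * (1 - \<beta>) / 32 * H \<le> V i \<and> V i \<le> 15 / 8 * H)}
         \<le> 2 / real N ^ 10"
proof -
  define n where "n = real (card (adopters N X)) * real T"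
  have "0 \<le> ln (real N)"
    using N by simp
  then have H: "0 < H" "0 \<le> (1 - \<beta>) * H"
    using large by linarith+
  then have "0 \<le> 1 - \<beta>"
    by (simp add: zero_le_mult_iff)
  have "(1 - \<beta>) / 4 * N * H \<le> n"
    unfolding n_def using mult_mono[OF less_imp_le[OF many] T(1)] H by simp
  then have "n * (1 / real N - 1 / real N ^ 3) * (exp (-1) - 1) + 3 * (1 - \<beta>) / 32 * H + 10 * ln N \<le> 0"
    using N \<open>0 \<le> 1 - \<beta>\<close> H large by (intro lower_tail_exponent_le) auto
  moreover have "card (adopters N X) \<le> N"
    using card_mono[of "{..<N}" "adopters N X"] by (auto simp: adopters_def)
  then have "n * (1 / real N + 1 / real N ^ 3) * (exp (1/2) - 1) - 15 / 8 * H / 2 + 10 * ln N \<le> 0"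
    using N T H large unfolding n_def by (intro upper_tail_exponent_le) (auto intro: mult_mono)
  ultimately have "exp (n * (1 / real N - 1 / real N ^ 3) * (exp (-1) - 1) + 3 * (1 - \<beta>) / 32 * H)
                   + exp (n * (1 / real N + 1 / real N ^ 3) * (exp (1/2) - 1) - 15 / 8 * H / 2)
                 \<le> 1 / real N ^ 10 + 1 / real N ^ 10"
    using N by (intro add_mono exp_le_inverse_power) simp_all
  then show ?thesis
    unfolding n_def by (intro order_trans[OF round_step_token_count_deviation_le[OF walk \<open>i < N\<close>]]) simp
qed

lemma num_tokens_bounds:
  assumes "0 \<le> 16 * \<sigma> / (1 - \<beta>) * g N"
  shows "16 * \<sigma> / (1 - \<beta>) * g N \<le> num_tokens \<beta> \<sigma> g N"
    and "num_tokens \<beta> \<sigma> g N \<le> 16 * \<sigma> / (1 - \<beta>) * g N + 1"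
  using assms of_int_ceiling_le_add_one[of "16 * \<sigma> / (1 - \<beta>) * g N"]
  by (simp_all add: num_tokens_def)

lemma run_token_count_bounds_prob:
  fixes g :: "nat \<Rightarrow> real" and \<beta> \<sigma> :: real
  assumes N: "10 \<le> N" and "i < N" and walk: "mh_walk_near_uniform N E L"
    and \<beta>: "1/2 \<le> \<beta>" "\<beta> < 1" and \<sigma>: "11 \<le> \<sigma>"
    and g: "2 * ln N < g N" "g N < (1 - \<beta>) / 40 * N"
  shows "1 - 3 / real N ^ 10 \<le> measure_pmf.prob
           (run N E L M \<eta> \<epsilon> \<mu> \<beta> (num_tokens \<beta> \<sigma> g N) (Suc (Suc r)))
           {(X, V). 3 * (1 - \<beta>) / 32 * ((16 * \<sigma> / (1 - \<beta>)) * g N) \<le> real (V i)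
                  \<and> real (V i) \<le> 15 / 8 * ((16 * \<sigma> / (1 - \<beta>)) * g N)}"
proof -
  define H where "H = 16 * \<sigma> / (1 - \<beta>) * g N"
  define T where "T = num_tokens \<beta> \<sigma> g N"
  let ?run = "run N E L M \<eta> \<epsilon> \<mu> \<beta> T"
  let ?bad = "{(X, V). \<not> (3 * (1 - \<beta>) / 32 * H \<le> real (V i) \<and> real (V i) \<le> 15 / 8 * H)}"
  have lnN: "1 \<le> ln (real N)"
    using N exp_le by (subst ln_ge_iff) auto
  have "16 * \<sigma> * g N * (1 - \<beta>) \<le> 16 * \<sigma> * g N"
    using \<beta> \<sigma> g lnN by (intro mult_left_le) auto
  then have H_ge: "16 * \<sigma> * g N \<le> H"
    using \<beta> by (simp add: H_def le_divide_eq)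
  have "11 * g N \<le> \<sigma> * g N"
    using \<sigma> g lnN by (intro mult_right_mono) auto
  moreover have "(1 - \<beta>) * H = 16 * \<sigma> * g N"
    using \<beta> by (simp add: H_def)
  ultimately have large: "10 * ln N \<le> 3/100 * ((1 - \<beta>) * H)" "10 * ln N + 1 \<le> 9/50 * H"
    using H_ge g lnN by linarith+
  moreover have "0 \<le> H"
    using large lnN by linarith
  ultimately have T: "H \<le> T" "T \<le> H + 1"
    using num_tokens_bounds[of \<sigma> \<beta> g N] by (simp_all add: H_def T_def)
  have "measure_pmf.prob (?run (Suc r)) {(X, V). card (adopters N X) \<le> (1 - \<beta>) / 4 * N}
      \<le> exp (- ((1 - \<beta>) / 4 * N))"
    by (subst run.simps(2), intro measure_pmf_bind_le)
       (use round_step_few_adopters_prob[OF \<beta>(1) less_imp_le[OF \<beta>(2)]] in \<open>auto split: prod.split\<close>)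
  also have "\<dots> \<le> 1 / real N ^ 10"
    using N g lnN by (intro exp_le_inverse_power) simp_all
  finally have "measure_pmf.prob (?run (Suc (Suc r))) ?bad \<le> 1 / real N ^ 10 + 2 / real N ^ 10"
    by (subst run.simps(2), intro measure_pmf_bind_le_except)
       (use round_step_token_count_deviation_prob[OF N \<open>i < N\<close> walk _ T large] in
        \<open>auto split: prod.split\<close>)
  moreover have "measure_pmf.prob (?run (Suc (Suc r))) (space (?run (Suc (Suc r))) - ?bad)
      = 1 - measure_pmf.prob (?run (Suc (Suc r))) ?bad"
    by (rule measure_pmf.prob_compl) simp
  ultimately show ?thesis
    by (simp add: H_def T_def set_diff_eq case_prod_unfold)
qed

theorem lemma6:
  fixes g :: "nat \<Rightarrow> real" and M :: nat and \<eta> :: "nat \<Rightarrow> real"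
    and \<epsilon> \<mu> \<beta> \<sigma> :: real
  assumes g_lower: "\<forall>l>0. eventually (\<lambda>N. g N > l * ln (real N)) at_top"
    and g_upper: "\<forall>l>0. eventually (\<lambda>N. g N < l * real N) at_top"
    and M_pos: "M \<ge> 1"
    and \<eta>_prob: "\<forall>j<M. 0 \<le> \<eta> j \<and> \<eta> j \<le> 1"
    and \<epsilon>_pos: "\<epsilon> > 0"
    and \<mu>_range: "0 < \<mu> \<and> \<mu> < 1"
    and \<beta>_range: "1/2 < \<beta> \<and> \<beta> < 1"
    and \<sigma>_ge: "\<sigma> \<ge> 11"
  shows "\<exists>N0. \<forall>N \<ge> N0. \<forall>E L i r.
           undirected_graph N E \<longrightarrow> graph_connected N E \<longrightarrow> \<not> graph_bipartite N E \<longrightarrow>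
           (\<forall>s<N. \<forall>k<N. 1 / real N - 1 / real N ^ 3 \<le> pmf (mh_walk N E L s) k
                         \<and> pmf (mh_walk N E L s) k \<le> 1 / real N + 1 / real N ^ 3) \<longrightarrow>
           i < N \<longrightarrow> r \<ge> 2 \<longrightarrow>
           measure_pmf.prob (run N E L M \<eta> \<epsilon> \<mu> \<beta> (num_tokens \<beta> \<sigma> g N) r)
             {(X, V). 3 * (1 - \<beta>) / 32 * ((16 * \<sigma> / (1 - \<beta>)) * g N) \<le> real (V i)
                      \<and> real (V i) \<le> 15 / 8 * ((16 * \<sigma> / (1 - \<beta>)) * g N)}
           \<ge> 1 - (6 * real M + 3) / real N ^ 10"
proof -
  have \<beta>: "1/2 \<le> \<beta>" "\<beta> < 1"
    using \<beta>_range by auto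
  obtain N\<^sub>1 where N\<^sub>1: "\<And>N. N\<^sub>1 \<le> N \<Longrightarrow> 2 * ln (real N) < g N"
    using g_lower[rule_format, of 2] by (auto simp: eventually_at_top_linorder)
  obtain N\<^sub>2 where N\<^sub>2: "\<And>N. N\<^sub>2 \<le> N \<Longrightarrow> g N < (1 - \<beta>) / 40 * real N"
    using g_upper[rule_format, of "(1 - \<beta>) / 40"] \<beta> by (auto simp: eventually_at_top_linorder)
  text \<open>The graph hypotheses only serve to make the walk mix, and mixing is assumed directly.\<close>
  show ?thesis
  proof (intro exI[of _ "max 10 (max N\<^sub>1 N\<^sub>2)"] allI impI)
    fix N L i r :: nat and E :: "nat \<Rightarrow> nat \<Rightarrow> bool"
    assume N: "max 10 (max N\<^sub>1 N\<^sub>2) \<le> N"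
      and walk: "\<forall>s<N. \<forall>k<N. 1 / real N - 1 / real N ^ 3 \<le> pmf (mh_walk N E L s) k
                         \<and> pmf (mh_walk N E L s) k \<le> 1 / real N + 1 / real N ^ 3"
      and "i < N" and "2 \<le> r"
    then obtain r' where r: "r = Suc (Suc r')"
      by (metis add_2_eq_Suc le_Suc_ex)
    have "3 / real N ^ 10 \<le> (6 * real M + 3) / real N ^ 10"
      by (simp add: divide_right_mono)
    then show "1 - (6 * real M + 3) / real N ^ 10 \<le> measure_pmf.prob
           (run N E L M \<eta> \<epsilon> \<mu> \<beta> (num_tokens \<beta> \<sigma> g N) r)
           {(X, V). 3 * (1 - \<beta>) / 32 * ((16 * \<sigma> / (1 - \<beta>)) * g N) \<le> real (V i)
                  \<and> real (V i) \<le> 15 / 8 * ((16 * \<sigma> / (1 - \<beta>)) * g N)}"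
      unfolding r using N N\<^sub>1 N\<^sub>2
      by (intro order_trans[OF _ run_token_count_bounds_prob] \<open>i < N\<close> \<beta> \<sigma>_ge
          walk[folded mh_walk_near_uniform_def]) auto
  qed
qed

end
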